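(* Let $(\lambda_n)_{n\ge0}$ be an increasing sequence of non-negative real numbers tending to infinity and let $(c_n)_{n\ge0}$ be complex numbers. Then $$\sum_{\lambda_n\le x}\lambda_n|c_n|=O(x)\quad(x\to\infty)$$ holds if and only if $$\sum_{x\le\lambda_n}\frac{|c_n|}{\lambda_n}=O\!\left(\frac1x\right)\quad(x\to\infty).$$ *)

theory Defs
  imports "HOL-Analysis.Analysis" "HOL-Library.Landau_Symbols"
begin

end

theory Submission
  imports Defs
begin

(*
  Both directions are dyadic decompositions; write a_n = |c_n|.
  If S(y) = sum_{lam_n <= y} lam_n a_n <= C y, cut the tail lam_n >= x into shells
  x 2^k <= lam_n < x 2^(k+1). There a_n / lam_n <= lam_n a_n / (x 2^k)^2, so a shell
  contributes at most S(x 2^(k+1)) / (x 2^k)^2 <= (2C/x) 2^-k, and the geometric series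
  gives 4C/x. Conversely, if T(y) = sum_{lam_n >= y} a_n / lam_n <= C/y, cut lam_n <= x
  into shells x 2^-(k+1) <= lam_n <= x 2^-k, on which lam_n a_n <= (x 2^-k)^2 a_n / lam_n;
  a shell contributes at most (x 2^-k)^2 T(x 2^-(k+1)) <= 2Cx 2^-k.
*)

lemma finite_sublevel_if_filterlim_at_top:
  fixes lam :: "nat \<Rightarrow> real"
  assumes "filterlim lam at_top sequentially"
  shows "finite {n. lam n \<le> x}"
proof -
  have "\<forall>\<^sub>F n in sequentially. x < lam n"
    using assms by (simp add: filterlim_at_top_dense)
  then show ?thesis
    by (simp add: cofinite_eq_sequentially[symmetric] eventually_cofinite not_less)
qed

lemma dyadic_shell_exists:
  fixes a t :: real
  assumes "a \<le> t" "t < a * 2^m"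
  shows "\<exists>k<m. a * 2^k \<le> t \<and> t < a * 2^Suc k"
  using assms(2)
proof (induction m)
  case 0
  with assms(1) show ?case by simp
next
  case (Suc m)
  show ?case
  proof (cases "t < a * 2^m")
    case True
    with Suc.IH show ?thesis using less_SucI by blast
  next
    case False
    with Suc.prems show ?thesis by (intro exI[of _ m]) auto
  qed
qed

lemma sum_le_by_dyadic_blocks:
  fixes f :: "'a \<Rightarrow> real" and g :: "nat \<Rightarrow> 'a \<Rightarrow> real"
  assumes "finite F" and "B \<ge> 0" and g_nonneg: "\<And>k n. g k n \<ge> 0"
    and pointwise: "\<And>n. n \<in> F \<Longrightarrow> \<exists>k<K. f n \<le> g k n"
    and blockwise: "\<And>k. (\<Sum>n\<in>F. g k n) \<le> B * (1/2)^k"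
  shows "(\<Sum>n\<in>F. f n) \<le> 2 * B"
proof -
  have "(\<Sum>n\<in>F. f n) \<le> (\<Sum>n\<in>F. \<Sum>k<K. g k n)"
  proof (rule sum_mono)
    fix n assume "n \<in> F"
    then obtain k where "k < K" and "f n \<le> g k n" using pointwise by blast
    note \<open>f n \<le> g k n\<close>
    also have "g k n \<le> (\<Sum>k<K. g k n)"
      using \<open>k < K\<close> g_nonneg by (intro member_le_sum) auto
    finally show "f n \<le> (\<Sum>k<K. g k n)" .
  qed
  also have "\<dots> = (\<Sum>k<K. \<Sum>n\<in>F. g k n)" by (rule sum.swap)
  also have "\<dots> \<le> (\<Sum>k<K. B * (1/2)^k)" by (intro sum_mono blockwise)
  also have "\<dots> = B * (2 - 2 * (1/2)^K)" by (simp add: sum_distrib_left[symmetric] sum_gp_strict)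
  also have "\<dots> \<le> 2 * B" using \<open>B \<ge> 0\<close> by (simp add: algebra_simps)
  finally show ?thesis .
qed

lemma tail_sum_le_if_partial_sums_linear:
  fixes lam a :: "nat \<Rightarrow> real"
  assumes "x > 0" and "C \<ge> 0" and a_nonneg: "\<And>n. a n \<ge> 0" and lam_nonneg: "\<And>n. lam n \<ge> 0"
    and fin: "\<And>y. finite {n. lam n \<le> y}"
    and partial: "\<And>y. y \<ge> x \<Longrightarrow> (\<Sum>n\<in>{n. lam n \<le> y}. lam n * a n) \<le> C * y"
    and "finite F" and F_tail: "\<And>n. n \<in> F \<Longrightarrow> x \<le> lam n"
  shows "(\<Sum>n\<in>F. a n / lam n) \<le> 4 * C / x"
proof -
  obtain K where K: "(\<Sum>n\<in>F. lam n) < x * 2^K"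
    using real_arch_pow[of 2 "(\<Sum>n\<in>F. lam n) / x"] \<open>x > 0\<close> by (auto simp: field_simps)
  define g where "g k n = (if lam n \<le> x * 2^Suc k then lam n * a n else 0) / (x * 2^k)^2" for k n
  have "(\<Sum>n\<in>F. a n / lam n) \<le> 2 * (2 * C / x)"
  proof (rule sum_le_by_dyadic_blocks[OF \<open>finite F\<close>])
    show "0 \<le> 2 * C / x" using \<open>C \<ge> 0\<close> \<open>x > 0\<close> by simp
    show "0 \<le> g k n" for k n unfolding g_def using a_nonneg lam_nonneg by simp
  next
    fix n assume "n \<in> F"
    have "lam n \<le> (\<Sum>n\<in>F. lam n)"
      using \<open>finite F\<close> \<open>n \<in> F\<close> lam_nonneg by (intro member_le_sum) auto
    with K F_tail[OF \<open>n \<in> F\<close>] obtain k where "k < K" and k: "x * 2^k \<le> lam n" "lam n < x * 2^Suc k"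
      using dyadic_shell_exists by (meson le_less_trans)
    have "0 < x * 2^k" using \<open>x > 0\<close> by simp
    have "a n / lam n = lam n * a n / (lam n)^2"
      using \<open>0 < x * 2^k\<close> k by (simp add: power2_eq_square)
    also have "\<dots> \<le> lam n * a n / (x * 2^k)^2"
      using \<open>0 < x * 2^k\<close> \<open>x > 0\<close> k a_nonneg[of n] lam_nonneg[of n]
      by (intro divide_left_mono mult_nonneg_nonneg power_mono mult_pos_pos) auto
    also have "\<dots> = g k n" using k unfolding g_def by simp
    finally show "\<exists>k<K. a n / lam n \<le> g k n" using \<open>k < K\<close> by blast
  next
    fix k
    let ?y = "x * 2^Suc k"
    have "(\<Sum>n\<in>F. g k n) = (\<Sum>n\<in>{n\<in>F. lam n \<le> ?y}. lam n * a n) / (x * 2^k)^2"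
      unfolding g_def using \<open>finite F\<close> by (simp add: sum_divide_distrib[symmetric] sum.inter_filter)
    also have "\<dots> \<le> (\<Sum>n\<in>{n. lam n \<le> ?y}. lam n * a n) / (x * 2^k)^2"
      using fin[of ?y] a_nonneg lam_nonneg by (intro divide_right_mono sum_mono2) auto
    also have "\<dots> \<le> C * ?y / (x * 2^k)^2"
      using partial[of ?y] \<open>x > 0\<close> one_le_power[of "2::real" "Suc k"]
      by (intro divide_right_mono) simp_all
    also have "\<dots> = 2 * C / x * (1/2)^k"
      using \<open>x > 0\<close> by (simp add: field_simps power2_eq_square power_mult_distrib)
    finally show "(\<Sum>n\<in>F. g k n) \<le> 2 * C / x * (1/2)^k" .
  qed
  then show ?thesis by simp
qed

lemma partial_sum_le_if_tail_sums_reciprocal: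
  fixes lam a :: "nat \<Rightarrow> real"
  assumes "x0 > 0" and "C \<ge> 0" and a_nonneg: "\<And>n. a n \<ge> 0" and lam_nonneg: "\<And>n. lam n \<ge> 0"
    and fin: "\<And>y. finite {n. lam n \<le> y}"
    and tail: "\<And>y. y \<ge> x0 \<Longrightarrow> (\<lambda>n. a n / lam n) summable_on {n. y \<le> lam n} \<and>
                 (\<Sum>\<^sub>\<infinity>n\<in>{n. y \<le> lam n}. a n / lam n) \<le> C / y"
    and "x \<ge> 2 * x0"
  shows "(\<Sum>n\<in>{n. 2 * x0 \<le> lam n \<and> lam n \<le> x}. lam n * a n) \<le> 4 * C * x"
proof -
  define G where "G = {n. 2 * x0 \<le> lam n \<and> lam n \<le> x}"
  have "finite G" unfolding G_def by (rule finite_subset[OF _ fin[of x]]) auto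
  have "x > 0" using \<open>x \<ge> 2 * x0\<close> \<open>x0 > 0\<close> by simp
  obtain K where K: "x < x0 * 2^K"
    using real_arch_pow[of 2 "x / x0"] \<open>x0 > 0\<close> by (auto simp: field_simps)
  define g where "g k n = (if x0 \<le> x / 2^Suc k \<and> x / 2^Suc k \<le> lam n then a n / lam n else 0)
                          * (x / 2^k)^2" for k n
  have "(\<Sum>n\<in>G. lam n * a n) \<le> 2 * (2 * C * x)"
  proof (rule sum_le_by_dyadic_blocks[OF \<open>finite G\<close>])
    show "0 \<le> 2 * C * x" using \<open>C \<ge> 0\<close> \<open>x > 0\<close> by simp
    show "0 \<le> g k n" for k n unfolding g_def using a_nonneg lam_nonneg by simp
  next
    fix n assume "n \<in> G"
    then have n: "2 * x0 \<le> lam n" "lam n \<le> x" unfolding G_def by auto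
    have "x0 * 2^K \<le> lam n * 2^K" using n \<open>x0 > 0\<close> by (intro mult_right_mono) auto
    with K have "x < lam n * 2^K" by linarith
    then obtain k where "k < K" and k: "lam n * 2^k \<le> x" "x < lam n * 2^Suc k"
      using dyadic_shell_exists[OF n(2)] by blast
    have "lam n > 0" using n \<open>x0 > 0\<close> by simp
    have shell: "x / 2^Suc k \<le> lam n" "lam n \<le> x / 2^k"
      using k \<open>lam n > 0\<close> by (simp_all add: field_simps)
    have "x0 * 2^Suc k = 2 * x0 * 2^k" by simp
    also have "\<dots> \<le> lam n * 2^k" using n by (intro mult_right_mono) auto
    also have "\<dots> \<le> x" by (fact k(1))
    finally have "x0 \<le> x / 2^Suc k" by (simp add: field_simps)
    have "lam n * a n = (a n / lam n) * (lam n)^2"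
      using \<open>lam n > 0\<close> by (simp add: power2_eq_square)
    also have "\<dots> \<le> (a n / lam n) * (x / 2^k)^2"
      using shell \<open>lam n > 0\<close> a_nonneg[of n] by (intro mult_left_mono power_mono) auto
    also have "\<dots> = g k n" unfolding g_def using shell \<open>x0 \<le> x / 2^Suc k\<close> by simp
    finally show "\<exists>k<K. lam n * a n \<le> g k n" using \<open>k < K\<close> by blast
  next
    fix k
    let ?y = "x / 2^Suc k"
    show "(\<Sum>n\<in>G. g k n) \<le> 2 * C * x * (1/2)^k"
    proof (cases "x0 \<le> ?y")
      case False
      then show ?thesis unfolding g_def using \<open>C \<ge> 0\<close> \<open>x > 0\<close> by simp
    next
      case True
      have "(\<Sum>n\<in>G. g k n) = (\<Sum>n\<in>{n\<in>G. ?y \<le> lam n}. a n / lam n) * (x / 2^k)^2"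
        unfolding g_def using True \<open>finite G\<close> by (simp add: sum_distrib_right[symmetric] sum.inter_filter)
      also have "\<dots> \<le> (\<Sum>\<^sub>\<infinity>n\<in>{n. ?y \<le> lam n}. a n / lam n) * (x / 2^k)^2"
        using tail[OF True] \<open>finite G\<close> a_nonneg lam_nonneg
        by (intro mult_right_mono finite_sum_le_infsum) auto
      also have "\<dots> \<le> C / ?y * (x / 2^k)^2"
        using tail[OF True] by (intro mult_right_mono) auto
      also have "\<dots> = 2 * C * x * (1/2)^k"
        using \<open>x > 0\<close> by (simp add: field_simps power2_eq_square power_mult_distrib)
      finally show ?thesis .
    qed
  qed
  then show ?thesis unfolding G_def by simp
qed

lemma tail_sums_bigO_if_partial_sums_bigO:
  fixes lam a :: "nat \<Rightarrow> real"
  assumes a_nonneg: "\<And>n. a n \<ge> 0" and lam_nonneg: "\<And>n. lam n \<ge> 0"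
    and lam_tendsto: "filterlim lam at_top sequentially"
    and "(\<lambda>x. \<Sum>n\<in>{n. lam n \<le> x}. lam n * a n) \<in> O(\<lambda>x. x)"
  shows "(\<forall>\<^sub>F x in at_top. (\<lambda>n. a n / lam n) summable_on {n. x \<le> lam n}) \<and>
         (\<lambda>x. \<Sum>\<^sub>\<infinity>n\<in>{n. x \<le> lam n}. a n / lam n) \<in> O(\<lambda>x. 1 / x)"
proof -
  have fin: "finite {n. lam n \<le> y}" for y
    using lam_tendsto by (rule finite_sublevel_if_filterlim_at_top)
  from assms(4) obtain C where "C > 0"
    and "\<forall>\<^sub>F x in at_top. norm (\<Sum>n\<in>{n. lam n \<le> x}. lam n * a n) \<le> C * norm x"
    by (rule landau_o.bigE)
  then obtain x1 where x1: "\<And>y. y \<ge> x1 \<Longrightarrow> norm (\<Sum>n\<in>{n. lam n \<le> y}. lam n * a n) \<le> C * norm y"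
    by (auto simp: eventually_at_top_linorder)
  have tail: "(\<lambda>n. a n / lam n) summable_on {n. x \<le> lam n} \<and>
              (\<Sum>\<^sub>\<infinity>n\<in>{n. x \<le> lam n}. a n / lam n) \<le> 4 * C / x"
    if "x \<ge> max x1 1" for x
  proof -
    have partial: "(\<Sum>n\<in>{n. lam n \<le> y}. lam n * a n) \<le> C * y" if "y \<ge> x" for y
      using x1[of y] \<open>x \<ge> max x1 1\<close> that by simp
    have finite_tail: "(\<Sum>n\<in>F. a n / lam n) \<le> 4 * C / x"
      if "finite F" "F \<subseteq> {n. x \<le> lam n}" for F
      using tail_sum_le_if_partial_sums_linear[of x C, OF _ _ a_nonneg lam_nonneg fin partial that(1)]
        \<open>x \<ge> max x1 1\<close> \<open>C > 0\<close> that(2) by auto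
    have "(\<lambda>n. a n / lam n) summable_on {n. x \<le> lam n}"
      using a_nonneg lam_nonneg finite_tail
      by (intro nonneg_bdd_above_summable_on bdd_aboveI[of _ "4 * C / x"]) auto
    moreover have "(\<Sum>\<^sub>\<infinity>n\<in>{n. x \<le> lam n}. a n / lam n) \<le> 4 * C / x"
      using calculation finite_tail by (intro infsum_le_finite_sums) auto
    ultimately show ?thesis ..
  qed
  have tail_ev: "\<forall>\<^sub>F x in at_top. (\<lambda>n. a n / lam n) summable_on {n. x \<le> lam n} \<and>
              (\<Sum>\<^sub>\<infinity>n\<in>{n. x \<le> lam n}. a n / lam n) \<le> 4 * C / x"
    using eventually_ge_at_top[of "max x1 1"] tail by (rule eventually_mono)
  have "\<forall>\<^sub>F x in at_top. norm (\<Sum>\<^sub>\<infinity>n\<in>{n. x \<le> lam n}. a n / lam n) \<le> 4 * C * norm (1 / x)"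
    using tail_ev eventually_gt_at_top[of 0]
  proof eventually_elim
    case (elim x)
    moreover have "(\<Sum>\<^sub>\<infinity>n\<in>{n. x \<le> lam n}. a n / lam n) \<ge> 0"
      using a_nonneg lam_nonneg by (intro infsum_nonneg) auto
    ultimately show ?case by simp
  qed
  then show ?thesis
    using eventually_mono[OF tail_ev] by (auto intro: bigoI)
qed

lemma partial_sums_bigO_if_tail_sums_bigO:
  fixes lam a :: "nat \<Rightarrow> real"
  assumes a_nonneg: "\<And>n. a n \<ge> 0" and lam_nonneg: "\<And>n. lam n \<ge> 0"
    and lam_tendsto: "filterlim lam at_top sequentially"
    and summable: "\<forall>\<^sub>F x in at_top. (\<lambda>n. a n / lam n) summable_on {n. x \<le> lam n}"
    and "(\<lambda>x. \<Sum>\<^sub>\<infinity>n\<in>{n. x \<le> lam n}. a n / lam n) \<in> O(\<lambda>x. 1 / x)"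
  shows "(\<lambda>x. \<Sum>n\<in>{n. lam n \<le> x}. lam n * a n) \<in> O(\<lambda>x. x)"
proof -
  define S where "S x = (\<Sum>n\<in>{n. lam n \<le> x}. lam n * a n)" for x
  have fin: "finite {n. lam n \<le> y}" for y
    using lam_tendsto by (rule finite_sublevel_if_filterlim_at_top)
  have S_nonneg: "S x \<ge> 0" for x
    unfolding S_def using a_nonneg lam_nonneg by (intro sum_nonneg) auto
  from assms(5) obtain C where "C > 0"
    and bound: "\<forall>\<^sub>F x in at_top. norm (\<Sum>\<^sub>\<infinity>n\<in>{n. x \<le> lam n}. a n / lam n) \<le> C * norm (1 / x)"
    by (rule landau_o.bigE)
  have "\<forall>\<^sub>F y in at_top. (\<lambda>n. a n / lam n) summable_on {n. y \<le> lam n} \<and>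
          (\<Sum>\<^sub>\<infinity>n\<in>{n. y \<le> lam n}. a n / lam n) \<le> C / y"
    using summable bound eventually_gt_at_top[of 0] by eventually_elim auto
  then obtain x0 where "x0 \<ge> 1" and tail: "\<And>y. y \<ge> x0 \<Longrightarrow>
      (\<lambda>n. a n / lam n) summable_on {n. y \<le> lam n} \<and> (\<Sum>\<^sub>\<infinity>n\<in>{n. y \<le> lam n}. a n / lam n) \<le> C / y"
    unfolding eventually_at_top_linorder by (metis max.bounded_iff max.cobounded2)
  have linear: "S x \<le> (S (2 * x0) + 4 * C) * x" if "x \<ge> 2 * x0" for x
  proof -
    define G where "G = {n. 2 * x0 \<le> lam n \<and> lam n \<le> x}"
    have "{n. lam n \<le> x} \<subseteq> {n. lam n \<le> 2 * x0} \<union> G" unfolding G_def by auto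
    moreover have "finite G" unfolding G_def by (rule finite_subset[OF _ fin[of x]]) auto
    ultimately have "S x \<le> (\<Sum>n\<in>{n. lam n \<le> 2 * x0} \<union> G. lam n * a n)"
      unfolding S_def using fin a_nonneg lam_nonneg by (intro sum_mono2) auto
    also have "\<dots> \<le> S (2 * x0) + (\<Sum>n\<in>G. lam n * a n)"
      unfolding S_def using fin \<open>finite G\<close> a_nonneg lam_nonneg
      by (simp add: sum_Un sum_nonneg)
    also have "(\<Sum>n\<in>G. lam n * a n) \<le> 4 * C * x"
      unfolding G_def using \<open>C > 0\<close> \<open>x0 \<ge> 1\<close> \<open>x \<ge> 2 * x0\<close>
      by (intro partial_sum_le_if_tail_sums_reciprocal[OF _ _ a_nonneg lam_nonneg fin tail]) auto
    also have "S (2 * x0) \<le> S (2 * x0) * x"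
      using S_nonneg[of "2 * x0"] \<open>x0 \<ge> 1\<close> \<open>x \<ge> 2 * x0\<close> by (simp add: mult_le_cancel_left1)
    finally show ?thesis by (simp add: algebra_simps)
  qed
  have "\<forall>\<^sub>F x in at_top. norm (S x) \<le> (S (2 * x0) + 4 * C) * norm x"
    using eventually_ge_at_top[of "2 * x0"]
  proof eventually_elim
    case (elim x)
    with linear[OF elim] S_nonneg[of x] \<open>x0 \<ge> 1\<close> show ?case by simp
  qed
  then show ?thesis unfolding S_def by (rule bigoI)
qed

theorem lemma2p2:
  fixes lam :: "nat \<Rightarrow> real" and c :: "nat \<Rightarrow> complex"
  assumes "strict_mono lam"
    and "\<And>n. lam n \<ge> 0"
    and "filterlim lam at_top sequentially"
  shows "(\<lambda>x::real. \<Sum>n\<in>{n. lam n \<le> x}. lam n * norm (c n)) \<in> O(\<lambda>x. x)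
     \<longleftrightarrow>
     ((\<forall>\<^sub>F x in at_top. (\<lambda>n. norm (c n) / lam n) summable_on {n. x \<le> lam n}) \<and>
      (\<lambda>x::real. \<Sum>\<^sub>\<infinity>n\<in>{n. x \<le> lam n}. norm (c n) / lam n) \<in> O(\<lambda>x. 1 / x))"
  using tail_sums_bigO_if_partial_sums_bigO[of "\<lambda>n. norm (c n)" lam]
    partial_sums_bigO_if_tail_sums_bigO[of "\<lambda>n. norm (c n)" lam] assms(2,3)
  by auto

end
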